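(* Let $R,R'$ be commutative rings, $S\subseteq R$ a multiplicatively closed set, and $\phi^*:R\to R'$, $\psi^*:R'\to S^{-1}R$ ring homomorphisms such that $\psi^*(\phi^*(f))=f/1$ for all $f\in R$. Let $I'\subseteq R'$ be a prime ideal with generators $f'_1,\dots,f'_k$, write $\psi^*(f'_i)=g_i/h_i$ with $g_i\in R$, $h_i\in S$, and set $I=(\phi^* )^{-1}(I')$ and $J=\langle g_1,\dots,g_k\rangle\subseteq R$. If $J\subseteq I$ and $I\cap S=\emptyset$, then $I=J:S$.
   Context: For an ideal $J$ and multiplicatively closed set $S$ in $R$, the saturation is $J:S=\{f\in R: fs\in J \text{ for some } s\in S\}$. $S^{-1}R$ is the localization of $R$ at $S$. *)

theory Defs
  imports Main
begin

definition ring_hom :: "('a::comm_ring_1 \<Rightarrow> 'b::comm_ring_1) \<Rightarrow> bool" where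
  "ring_hom f \<longleftrightarrow> f 1 = 1 \<and> (\<forall>x y. f (x + y) = f x + f y) \<and> (\<forall>x y. f (x * y) = f x * f y)"

definition ideal :: "'a::comm_ring_1 set \<Rightarrow> bool" where
  "ideal I \<longleftrightarrow> 0 \<in> I \<and> (\<forall>x\<in>I. \<forall>y\<in>I. x + y \<in> I) \<and> (\<forall>r. \<forall>x\<in>I. r * x \<in> I)"

definition prime_ideal :: "'a::comm_ring_1 set \<Rightarrow> bool" where
  "prime_ideal I \<longleftrightarrow> ideal I \<and> I \<noteq> UNIV \<and> (\<forall>a b. a * b \<in> I \<longrightarrow> a \<in> I \<or> b \<in> I)"

definition ideal_gen :: "(nat \<Rightarrow> 'a::comm_ring_1) \<Rightarrow> nat \<Rightarrow> 'a set" where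
  "ideal_gen f k = {x. \<exists>c. x = (\<Sum>i<k. c i * f i)}"

definition mult_closed :: "'a::comm_ring_1 set \<Rightarrow> bool" where
  "mult_closed S \<longleftrightarrow> 1 \<in> S \<and> (\<forall>x\<in>S. \<forall>y\<in>S. x * y \<in> S)"

definition saturation :: "'a::comm_ring_1 set \<Rightarrow> 'a set \<Rightarrow> 'a set" where
  "saturation J S = {f. \<exists>s\<in>S. f * s \<in> J}"

text \<open>loc : R -> L exhibits L as the localization S^{-1}R, with loc f = f/1
  (standard characterization of the localization up to unique isomorphism).\<close>
definition is_localization :: "'a::comm_ring_1 set \<Rightarrow> ('a \<Rightarrow> 'c::comm_ring_1) \<Rightarrow> bool" where
  "is_localization S loc \<longleftrightarrow> ring_hom loc
     \<and> (\<forall>s\<in>S. \<exists>u. loc s * u = 1)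
     \<and> (\<forall>x. \<exists>g. \<exists>h\<in>S. x * loc h = loc g)
     \<and> (\<forall>a. loc a = 0 \<longleftrightarrow> (\<exists>s\<in>S. s * a = 0))"

end

theory Submission
  imports Defs
begin

text \<open>Every generator f'_i of I' is sent by psi into the extension of J to the localization,
  since psi(f'_i) = g_i/h_i. As the preimage of an ideal is an ideal, psi maps all of I' into
  this extension, so for f in I the fraction f/1 = psi(phi f) has a numerator in J; clearing the
  denominator and the annihilating element of S puts f in J:S. Conversely J:S lies in the prime
  ideal I, which contains J and misses S.\<close>

lemma ring_hom_0: "ring_hom f \<Longrightarrow> f 0 = 0"
  unfolding ring_hom_def by (metis add.right_neutral add_left_cancel)

lemma ring_hom_diff: "ring_hom f \<Longrightarrow> f (a - b) = f a - f b"
  unfolding ring_hom_def by (metis add_diff_cancel diff_add_cancel)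

lemma ideal_sum_lessThan_mem:
  fixes n :: nat
  assumes "ideal I" and "\<And>i. i < n \<Longrightarrow> x i \<in> I"
  shows "(\<Sum>i<n. x i) \<in> I"
  using assms(2)
proof (induction n)
  case 0
  then show ?case using assms(1) by (simp add: ideal_def)
next
  case (Suc n)
  then show ?case using assms(1) by (simp add: ideal_def)
qed

lemma ideal_ideal_gen: "ideal (ideal_gen g k)"
  unfolding ideal_def ideal_gen_def
proof (intro conjI ballI allI)
  show "0 \<in> {x. \<exists>c. x = (\<Sum>i<k. c i * g i)}"
    by (rule CollectI, rule exI[of _ "\<lambda>_. 0"]) simp
next
  fix x y assume "x \<in> {x. \<exists>c. x = (\<Sum>i<k. c i * g i)}" "y \<in> {x. \<exists>c. x = (\<Sum>i<k. c i * g i)}"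
  then obtain c d where "x = (\<Sum>i<k. c i * g i)" "y = (\<Sum>i<k. d i * g i)" by auto
  then have "x + y = (\<Sum>i<k. (c i + d i) * g i)" by (simp add: sum.distrib distrib_right)
  then show "x + y \<in> {x. \<exists>c. x = (\<Sum>i<k. c i * g i)}" by (intro CollectI exI)
next
  fix r x assume "x \<in> {x. \<exists>c. x = (\<Sum>i<k. c i * g i)}"
  then obtain c where "x = (\<Sum>i<k. c i * g i)" by auto
  then have "r * x = (\<Sum>i<k. (r * c i) * g i)" by (simp add: sum_distrib_left mult.assoc)
  then show "r * x \<in> {x. \<exists>c. x = (\<Sum>i<k. c i * g i)}" by (intro CollectI exI)
qed

lemma ideal_gen_generator: "i < k \<Longrightarrow> g i \<in> ideal_gen g k"
  unfolding ideal_gen_def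
proof (rule CollectI, rule exI[of _ "\<lambda>j. if j = i then 1 else 0"])
  assume "i < k"
  have "(\<Sum>j<k. (if j = i then 1 else 0) * g j) = (\<Sum>j<k. if j = i then g j else 0)"
    by (rule sum.cong) auto
  also have "\<dots> = g i" using \<open>i < k\<close> by (simp add: sum.delta)
  finally show "g i = (\<Sum>j<k. (if j = i then 1 else 0) * g j)" by simp
qed

lemma ideal_gen_least:
  assumes "ideal I" and "\<And>i. i < k \<Longrightarrow> g i \<in> I"
  shows "ideal_gen g k \<subseteq> I"
proof
  fix x assume "x \<in> ideal_gen g k"
  then obtain c where x: "x = (\<Sum>i<k. c i * g i)" unfolding ideal_gen_def by auto
  have "\<And>i. i < k \<Longrightarrow> c i * g i \<in> I" using assms by (simp add: ideal_def)
  then show "x \<in> I" unfolding x by (rule ideal_sum_lessThan_mem[OF assms(1)])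
qed

lemma ideal_vimage:
  assumes "ring_hom f" and "ideal I"
  shows "ideal (f -` I)"
  using assms ring_hom_0[OF assms(1)] unfolding ideal_def ring_hom_def by auto

lemma prime_ideal_vimage:
  assumes f: "ring_hom f" and P: "prime_ideal P"
  shows "prime_ideal (f -` P)"
proof -
  have "1 \<notin> P"
    using P unfolding prime_ideal_def ideal_def by (metis UNIV_eq_I mult.right_neutral)
  then have "f -` P \<noteq> UNIV" using f unfolding ring_hom_def by (metis UNIV_I vimageE)
  moreover have "ideal (f -` P)" using P ideal_vimage[OF f] unfolding prime_ideal_def by blast
  moreover have "f (a * b) = f a * f b" for a b using f unfolding ring_hom_def by blast
  ultimately show ?thesis using P unfolding prime_ideal_def by auto
qed

lemma saturation_subset_prime_ideal:
  assumes "prime_ideal P" and "J \<subseteq> P" and "P \<inter> S = {}"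
  shows "saturation J S \<subseteq> P"
  using assms unfolding saturation_def prime_ideal_def by blast

definition localized_ideal :: "'a::comm_ring_1 set \<Rightarrow> ('a \<Rightarrow> 'c::comm_ring_1) \<Rightarrow> 'a set \<Rightarrow> 'c set"
  where "localized_ideal S loc J = {y. \<exists>t\<in>S. \<exists>x\<in>J. loc t * y = loc x}"

lemma ideal_localized_ideal:
  assumes S: "mult_closed S" and loc: "is_localization S loc" and J: "ideal J"
  shows "ideal (localized_ideal S loc J)"
proof -
  have hom: "ring_hom loc" and frac: "\<And>y. \<exists>e. \<exists>d\<in>S. y * loc d = loc e"
    using loc unfolding is_localization_def by auto
  have lmul: "\<And>a b. loc (a * b) = loc a * loc b" and ladd: "\<And>a b. loc (a + b) = loc a + loc b"
    using hom unfolding ring_hom_def by auto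
  have S1: "1 \<in> S" and Smul: "\<And>a b. a \<in> S \<Longrightarrow> b \<in> S \<Longrightarrow> a * b \<in> S"
    using S unfolding mult_closed_def by auto
  have J0: "0 \<in> J" and Jadd: "\<And>a b. a \<in> J \<Longrightarrow> b \<in> J \<Longrightarrow> a + b \<in> J"
    and Jmul: "\<And>r a. a \<in> J \<Longrightarrow> r * a \<in> J"
    using J unfolding ideal_def by auto
  have "0 \<in> localized_ideal S loc J"
    unfolding localized_ideal_def using S1 J0 ring_hom_0[OF hom] by force
  moreover have "y + y' \<in> localized_ideal S loc J"
    if y: "y \<in> localized_ideal S loc J" and y': "y' \<in> localized_ideal S loc J" for y y'
  proof -
    obtain t x t' x' where "t \<in> S" "x \<in> J" and tx: "loc t * y = loc x"
      and "t' \<in> S" "x' \<in> J" and tx': "loc t' * y' = loc x'"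
      using y y' unfolding localized_ideal_def by blast
    have "loc (t * t') * (y + y') = loc t' * (loc t * y) + loc t * (loc t' * y')"
      unfolding lmul by (simp add: distrib_left mult_ac)
    also have "\<dots> = loc (t' * x + t * x')"
      unfolding tx tx' by (simp add: lmul ladd)
    finally show ?thesis
      using \<open>t \<in> S\<close> \<open>t' \<in> S\<close> \<open>x \<in> J\<close> \<open>x' \<in> J\<close>
      unfolding localized_ideal_def using Smul Jadd Jmul by blast
  qed
  moreover have "r * y \<in> localized_ideal S loc J" if y: "y \<in> localized_ideal S loc J" for r y
  proof -
    obtain t x where "t \<in> S" "x \<in> J" and tx: "loc t * y = loc x"
      using y unfolding localized_ideal_def by blast
    obtain e d where "d \<in> S" and de: "r * loc d = loc e" using frac by blast
    have "loc (d * t) * (r * y) = (r * loc d) * (loc t * y)"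
      unfolding lmul by (simp add: mult_ac)
    also have "\<dots> = loc (e * x)"
      unfolding de tx by (simp add: lmul)
    finally show ?thesis
      using \<open>d \<in> S\<close> \<open>t \<in> S\<close> \<open>x \<in> J\<close>
      unfolding localized_ideal_def using Smul Jmul by blast
  qed
  ultimately show ?thesis unfolding ideal_def by blast
qed

lemma saturation_if_loc_mem_localized_ideal:
  assumes S: "mult_closed S" and loc: "is_localization S loc" and J: "ideal J"
    and f: "loc f \<in> localized_ideal S loc J"
  shows "f \<in> saturation J S"
proof -
  have hom: "ring_hom loc" and ker: "\<And>a. loc a = 0 \<Longrightarrow> \<exists>s\<in>S. s * a = 0"
    using loc unfolding is_localization_def by auto
  obtain t x where t: "t \<in> S" and x: "x \<in> J" and tx: "loc t * loc f = loc x"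
    using f unfolding localized_ideal_def by auto
  have "loc (f * t - x) = loc t * loc f - loc x"
    using hom by (simp add: ring_hom_diff ring_hom_def mult.commute)
  then have "loc (f * t - x) = 0" using tx by simp
  then obtain s where s: "s \<in> S" and "s * (f * t - x) = 0" using ker by blast
  then have "f * (t * s) = s * x" by (simp add: algebra_simps)
  then have "f * (t * s) \<in> J" using J x unfolding ideal_def by simp
  moreover have "t * s \<in> S" using S t s unfolding mult_closed_def by blast
  ultimately show ?thesis unfolding saturation_def by blast
qed

theorem lemma4p7:
  fixes S :: "'a::comm_ring_1 set"
    and loc :: "'a \<Rightarrow> 'c::comm_ring_1"
    and phi :: "'a \<Rightarrow> 'b::comm_ring_1"
    and psi :: "'b \<Rightarrow> 'c"
    and I' :: "'b set"
    and f' :: "nat \<Rightarrow> 'b"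
    and g h :: "nat \<Rightarrow> 'a"
    and k :: nat
  assumes "mult_closed S"
    and "is_localization S loc"
    and "ring_hom phi"
    and "ring_hom psi"
    and "\<forall>f. psi (phi f) = loc f"
    and "prime_ideal I'"
    and "I' = ideal_gen f' k"
    and "\<forall>i<k. h i \<in> S \<and> psi (f' i) * loc (h i) = loc (g i)"
    and "ideal_gen g k \<subseteq> phi -` I'"
    and "phi -` I' \<inter> S = {}"
  shows "phi -` I' = saturation (ideal_gen g k) S"
proof
  let ?J = "ideal_gen g k" and ?L = "localized_ideal S loc (ideal_gen g k)"
  have "psi (f' i) \<in> ?L" if "i < k" for i
  proof -
    have "h i \<in> S" and "loc (h i) * psi (f' i) = loc (g i)"
      using assms(8) that by (auto simp: mult.commute)
    then show ?thesis
      unfolding localized_ideal_def using ideal_gen_generator[OF that] by blast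
  qed
  moreover have "ideal (psi -` ?L)"
    using ideal_vimage[OF assms(4) ideal_localized_ideal[OF assms(1,2) ideal_ideal_gen]] .
  ultimately have I'_to_L: "I' \<subseteq> psi -` ?L"
    unfolding assms(7) by (intro ideal_gen_least) auto
  show "phi -` I' \<subseteq> saturation ?J S"
  proof
    fix f assume "f \<in> phi -` I'"
    then have "loc f \<in> ?L" using I'_to_L assms(5) by auto
    then show "f \<in> saturation ?J S"
      by (rule saturation_if_loc_mem_localized_ideal[OF assms(1,2) ideal_ideal_gen])
  qed
  show "saturation ?J S \<subseteq> phi -` I'"
    by (rule saturation_subset_prime_ideal[OF prime_ideal_vimage[OF assms(3,6)] assms(9,10)])
qed

end
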